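(* Let $(A,\mathfrak{m}_A)$ be a local homologically bounded DG algebra with $A\not\simeq 0$ and $\mathfrak{m}_A=A_+$, and let $K$ be a homologically finite DG $A$-module. Let $F\xrightarrow{\simeq} K$ be a minimal semifree resolution with semibasis $E$, fix an integer $r\geq \sup(H(K))$, let $\widetilde{K}=\tau_{\leq r}(F)$ be the soft truncation, let $L=F^{(r)}$ be the semifree DG $A$-submodule of $F$ spanned by the semibasis elements of degree $\leq r$, let $\pi\colon L\to \widetilde{K}$ be the composition of the inclusion $L\to F$ with the natural map $F\to\widetilde{K}$, and let $\operatorname{Syz}_r(K)=\ker(\pi)$ with inclusion $\alpha\colon\operatorname{Syz}_r(K)\to L$. Then there is a short exact sequence of morphisms of DG $A$-modules $$0\to\operatorname{Syz}_r(K)\xrightarrow{\alpha} L\xrightarrow{\pi}\widetilde{K}\to 0$$ such that $L$ is semifree with a finite semibasis, $\widetilde{K}\simeq K$, and $\operatorname{Im}(\alpha)\subseteq A_+L$.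
   Context: Complexes are indexed homologically. A DG algebra is a complex $A$ with a unital, associative, graded-commutative chain map multiplication; positively graded means $A_i=0$ for $i<0$. A positively graded DG algebra $A$ is local if $H_0(A)$ is a noetherian local ring and each $H_i(A)$ is a finitely generated $H_0(A)$-module; $\mathfrak{m}_A$ denotes its maximal ideal, here assumed equal to $A_+=\bigoplus_{i\geq1}A_i$ (so $A_0$ is a field). Homologically bounded means $\operatorname{amp}(H(A))<\infty$, where $\operatorname{amp}=\sup-\inf$ of degrees of nonzero components; $A\not\simeq 0$ means $H(A)\neq 0$. A DG $A$-module $K$ is homologically finite if $H(K)$ is finitely generated over $H_0(A)$. A DG $A$-module $X$ with $\inf(X)>-\infty$ is semifree if its underlying graded module is free over $A^\natural$; a semibasis is a homogeneous basis. A minimal semifree resolution of $K$ is a quasiisomorphism $F\to K$ with $F$ semifree, semibasis finite in each degree, and $\partial^F(F)\subseteq \mathfrak{m}_AF$ (these exist for homologically finite $K$). The soft truncation $\tau_{\leq r}(F)$ is the complex $\cdots\to 0\to F_r/\operatorname{Im}\partial_{r+1}\to F_{r-1}\to\cdots$, a DG $A$-module quotient of $F$. *)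

theory Defs
  imports "HOL-Algebra.Ideal" "HOL-Algebra.QuotRing" "HOL-Algebra.Ring_Divisibility"
begin

section \<open>DG algebras (homological grading), as graded pieces of a ring\<close>

record 'a dg_alg =
  agr :: "int \<Rightarrow> 'a set"
  adf :: "'a \<Rightarrow> 'a"

definition sgn_int :: "int \<Rightarrow> 'a::ring_1" where
  "sgn_int i = (if even i then 1 else - 1)"

definition dg_algebra :: "('a::ring_1) dg_alg \<Rightarrow> bool" where
  "dg_algebra A \<longleftrightarrow>
     (\<forall>i. 0 \<in> agr A i \<and> (\<forall>x\<in>agr A i. \<forall>y\<in>agr A i. x + y \<in> agr A i \<and> - x \<in> agr A i)) \<and>
     (\<forall>S a. finite S \<longrightarrow> (\<forall>i\<in>S. a i \<in> agr A i) \<longrightarrow> (\<Sum>i\<in>S. a i) = 0 \<longrightarrow> (\<forall>i\<in>S. a i = 0)) \<and>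
     1 \<in> agr A 0 \<and>
     (\<forall>i j. \<forall>x\<in>agr A i. \<forall>y\<in>agr A j. x * y \<in> agr A (i + j) \<and> x * y = sgn_int (i * j) * (y * x)) \<and>
     (\<forall>i. \<forall>x\<in>agr A i. adf A x \<in> agr A (i - 1) \<and> adf A (adf A x) = 0) \<and>
     (\<forall>i. \<forall>x\<in>agr A i. \<forall>y\<in>agr A i. adf A (x + y) = adf A x + adf A y) \<and>
     (\<forall>i j. \<forall>x\<in>agr A i. \<forall>y\<in>agr A j. adf A (x * y) = adf A x * y + sgn_int i * (x * adf A y))"

definition positively_graded :: "('a::ring_1) dg_alg \<Rightarrow> bool" where
  "positively_graded A \<longleftrightarrow> (\<forall>i<0. agr A i = {0})"

section \<open>DG modules, given degreewise (a complex is a family of abelian groups)\<close>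

record ('a, 'm) dg_mod =
  mgr :: "int \<Rightarrow> 'm set"
  mzr :: "int \<Rightarrow> 'm"
  mad :: "int \<Rightarrow> 'm \<Rightarrow> 'm \<Rightarrow> 'm"
  msm :: "int \<Rightarrow> int \<Rightarrow> 'a \<Rightarrow> 'm \<Rightarrow> 'm"     \<comment> \<open>msm j i: A_j x M_i -> M_(i+j)\<close>
  mdf :: "int \<Rightarrow> 'm \<Rightarrow> 'm"

definition dg_module :: "('a::ring_1) dg_alg \<Rightarrow> ('a, 'm) dg_mod \<Rightarrow> bool" where
  "dg_module A M \<longleftrightarrow>
     (\<forall>i. mzr M i \<in> mgr M i \<and>
          (\<forall>x\<in>mgr M i. \<forall>y\<in>mgr M i. mad M i x y \<in> mgr M i \<and> mad M i x y = mad M i y x) \<and>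
          (\<forall>x\<in>mgr M i. \<forall>y\<in>mgr M i. \<forall>z\<in>mgr M i. mad M i (mad M i x y) z = mad M i x (mad M i y z)) \<and>
          (\<forall>x\<in>mgr M i. mad M i (mzr M i) x = x) \<and>
          (\<forall>x\<in>mgr M i. \<exists>y\<in>mgr M i. mad M i x y = mzr M i)) \<and>
     (\<forall>i j. \<forall>a\<in>agr A j. \<forall>x\<in>mgr M i. msm M j i a x \<in> mgr M (i + j)) \<and>
     (\<forall>i j. \<forall>a\<in>agr A j. \<forall>b\<in>agr A j. \<forall>x\<in>mgr M i.
          msm M j i (a + b) x = mad M (i + j) (msm M j i a x) (msm M j i b x)) \<and>
     (\<forall>i j. \<forall>a\<in>agr A j. \<forall>x\<in>mgr M i. \<forall>y\<in>mgr M i.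
          msm M j i a (mad M i x y) = mad M (i + j) (msm M j i a x) (msm M j i a y)) \<and>
     (\<forall>i. \<forall>x\<in>mgr M i. msm M 0 i 1 x = x) \<and>
     (\<forall>i j k. \<forall>a\<in>agr A j. \<forall>b\<in>agr A k. \<forall>x\<in>mgr M i.
          msm M k (i + j) b (msm M j i a x) = msm M (j + k) i (b * a) x) \<and>
     (\<forall>i. \<forall>x\<in>mgr M i. mdf M i x \<in> mgr M (i - 1) \<and> mdf M (i - 1) (mdf M i x) = mzr M (i - 2)) \<and>
     (\<forall>i. \<forall>x\<in>mgr M i. \<forall>y\<in>mgr M i. mdf M i (mad M i x y) = mad M (i - 1) (mdf M i x) (mdf M i y)) \<and>
     (\<forall>i j. \<forall>a\<in>agr A j. \<forall>x\<in>mgr M i.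
          mdf M (i + j) (msm M j i a x) =
          mad M (i + j - 1) (msm M (j - 1) i (adf A a) x) (msm M j (i - 1) (sgn_int j * a) (mdf M i x)))"

definition dg_hom :: "('a::ring_1) dg_alg \<Rightarrow> ('a, 'm) dg_mod \<Rightarrow> ('a, 'n) dg_mod
                      \<Rightarrow> (int \<Rightarrow> 'm \<Rightarrow> 'n) \<Rightarrow> bool" where
  "dg_hom A M N f \<longleftrightarrow>
     (\<forall>i. \<forall>x\<in>mgr M i. f i x \<in> mgr N i) \<and>
     (\<forall>i. \<forall>x\<in>mgr M i. \<forall>y\<in>mgr M i. f i (mad M i x y) = mad N i (f i x) (f i y)) \<and>
     (\<forall>i. \<forall>x\<in>mgr M i. f (i - 1) (mdf M i x) = mdf N i (f i x)) \<and>
     (\<forall>i j. \<forall>a\<in>agr A j. \<forall>x\<in>mgr M i. f (i + j) (msm M j i a x) = msm N j i a (f i x))"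

definition cycles :: "('a, 'm) dg_mod \<Rightarrow> int \<Rightarrow> 'm set" where
  "cycles M i = {x \<in> mgr M i. mdf M i x = mzr M (i - 1)}"

definition bnds :: "('a, 'm) dg_mod \<Rightarrow> int \<Rightarrow> 'm set" where
  "bnds M i = mdf M (i + 1) ` mgr M (i + 1)"

definition homology_vanishes :: "('a, 'm) dg_mod \<Rightarrow> int \<Rightarrow> bool" where
  "homology_vanishes M i \<longleftrightarrow> cycles M i \<subseteq> bnds M i"

definition quasi_iso :: "('a::ring_1) dg_alg \<Rightarrow> ('a, 'm) dg_mod \<Rightarrow> ('a, 'n) dg_mod
                         \<Rightarrow> (int \<Rightarrow> 'm \<Rightarrow> 'n) \<Rightarrow> bool" where
  "quasi_iso A M N f \<longleftrightarrow> dg_hom A M N f \<and>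
     (\<forall>i. (\<forall>z\<in>cycles M i. f i z \<in> bnds N i \<longrightarrow> z \<in> bnds M i) \<and>
          (\<forall>w\<in>cycles N i. \<exists>z\<in>cycles M i. \<exists>b\<in>mgr N (i + 1). w = mad N i (f i z) (mdf N (i + 1) b)))"

definition msum :: "('a, 'm) dg_mod \<Rightarrow> int \<Rightarrow> ('b \<Rightarrow> 'm) \<Rightarrow> 'b set \<Rightarrow> 'm" where
  "msum M i g S = finprod \<lparr>carrier = mgr M i, mult = mad M i, one = mzr M i\<rparr> g S"

definition alg_mod :: "('a::ring_1) dg_alg \<Rightarrow> ('a, 'a) dg_mod" where
  "alg_mod A = \<lparr>mgr = agr A, mzr = (\<lambda>_. 0), mad = (\<lambda>_. (+)), msm = (\<lambda>_ _. (*)), mdf = (\<lambda>_. adf A)\<rparr>"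

definition A0ring :: "('a::ring_1) dg_alg \<Rightarrow> 'a ring" where
  "A0ring A = \<lparr>carrier = agr A 0, monoid.mult = (*), one = 1, zero = 0, add = (+)\<rparr>"

definition H0ring :: "('a::ring_1) dg_alg \<Rightarrow> 'a set ring" where
  "H0ring A = A0ring A Quot (adf A ` agr A 1)"

definition local_ring :: "('b, 'c) ring_scheme \<Rightarrow> bool" where
  "local_ring R \<longleftrightarrow> cring R \<and> (\<exists>!I. maximalideal I R)"

text \<open>H(M) is finitely generated over H_0(A) (by finitely many homogeneous classes;
  H_0(A) acts through representatives in A_0).\<close>
definition homologically_finite :: "('a::ring_1) dg_alg \<Rightarrow> ('a, 'm) dg_mod \<Rightarrow> bool" where
  "homologically_finite A M \<longleftrightarrow>
     (\<exists>G. finite G \<and> (\<forall>(i, g)\<in>G. g \<in> cycles M i) \<and>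
        (\<forall>i. \<forall>z\<in>cycles M i. \<exists>c b. (\<forall>g. c g \<in> agr A 0) \<and> b \<in> mgr M (i + 1) \<and>
             z = mad M i (msum M i (\<lambda>g. msm M 0 i (c g) g) {g. (i, g) \<in> G}) (mdf M (i + 1) b)))"

definition homology_fg :: "('a::ring_1) dg_alg \<Rightarrow> ('a, 'm) dg_mod \<Rightarrow> int \<Rightarrow> bool" where
  "homology_fg A M i \<longleftrightarrow>
     (\<exists>G. finite G \<and> G \<subseteq> cycles M i \<and>
        (\<forall>z\<in>cycles M i. \<exists>c b. (\<forall>g. c g \<in> agr A 0) \<and> b \<in> mgr M (i + 1) \<and>
             z = mad M i (msum M i (\<lambda>g. msm M 0 i (c g) g) G) (mdf M (i + 1) b)))"

definition local_dg_algebra :: "('a::ring_1) dg_alg \<Rightarrow> bool" where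
  "local_dg_algebra A \<longleftrightarrow> dg_algebra A \<and> positively_graded A \<and>
     local_ring (H0ring A) \<and> noetherian_ring (H0ring A) \<and> (\<forall>i. homology_fg A (alg_mod A) i)"

text \<open>m_A = A_+ : the maximal ideal of A is (preimage in A_0 of the maximal ideal of H_0(A)) + A_+;
  it equals A_+ iff that preimage is zero.\<close>
definition max_ideal_is_Aplus :: "('a::ring_1) dg_alg \<Rightarrow> bool" where
  "max_ideal_is_Aplus A \<longleftrightarrow>
     (\<forall>I. maximalideal I (H0ring A) \<longrightarrow>
        {a \<in> agr A 0. a_r_coset (A0ring A) (adf A ` agr A 1) a \<in> I} = {0})"

definition homologically_bounded :: "('a::ring_1) dg_alg \<Rightarrow> bool" where
  "homologically_bounded A \<longleftrightarrow> (\<exists>m n. \<forall>i. (i < m \<or> n < i) \<longrightarrow> homology_vanishes (alg_mod A) i)"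

definition dga_nonzero :: "('a::ring_1) dg_alg \<Rightarrow> bool" where
  "dga_nonzero A \<longleftrightarrow> (\<exists>i. \<not> homology_vanishes (alg_mod A) i)"

section \<open>Semifree modules, minimal resolutions\<close>

text \<open>Admissible coefficient families for a linear combination in degree n of a homogeneous
  family E (E j = elements of degree j): coefficient of e in E j lies in A_(n-j), finite support.\<close>
definition coeff_ok :: "('a::ring_1) dg_alg \<Rightarrow> (int \<Rightarrow> 'm set) \<Rightarrow> int \<Rightarrow> (int \<Rightarrow> 'm \<Rightarrow> 'a) \<Rightarrow> bool" where
  "coeff_ok A E n c \<longleftrightarrow>
     (\<forall>j e. c j e \<in> (if e \<in> E j then agr A (n - j) else {0})) \<and> finite {(j, e). c j e \<noteq> 0}"

definition lincomb :: "('a::zero, 'm) dg_mod \<Rightarrow> int \<Rightarrow> (int \<Rightarrow> 'm \<Rightarrow> 'a) \<Rightarrow> 'm" where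
  "lincomb M n c = msum M n (\<lambda>(j, e). msm M (n - j) j (c j e) e) {(j, e). c j e \<noteq> 0}"

definition span_set :: "('a::ring_1) dg_alg \<Rightarrow> ('a, 'm) dg_mod \<Rightarrow> (int \<Rightarrow> 'm set) \<Rightarrow> int \<Rightarrow> 'm set" where
  "span_set A M E n = {lincomb M n c | c. coeff_ok A E n c}"

definition semibasis :: "('a::ring_1) dg_alg \<Rightarrow> ('a, 'm) dg_mod \<Rightarrow> (int \<Rightarrow> 'm set) \<Rightarrow> bool" where
  "semibasis A M E \<longleftrightarrow> (\<forall>j. E j \<subseteq> mgr M j) \<and>
     (\<forall>n. \<forall>x\<in>mgr M n. \<exists>!c. coeff_ok A E n c \<and> x = lincomb M n c)"

definition semifree :: "('a::ring_1) dg_alg \<Rightarrow> ('a, 'm) dg_mod \<Rightarrow> (int \<Rightarrow> 'm set) \<Rightarrow> bool" where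
  "semifree A M E \<longleftrightarrow> dg_module A M \<and> (\<exists>b. \<forall>i<b. mgr M i = {mzr M i}) \<and> semibasis A M E"

text \<open>(A_+ S)_n: finite sums of a*s with a in A_j, j >= 1, s in S_(n-j).\<close>
inductive_set aplus_span :: "('a::ring_1) dg_alg \<Rightarrow> ('a, 'm) dg_mod \<Rightarrow> (int \<Rightarrow> 'm set) \<Rightarrow> int \<Rightarrow> 'm set"
  for A M S n where
  zero: "mzr M n \<in> aplus_span A M S n"
| step: "\<lbrakk>x \<in> aplus_span A M S n; 1 \<le> j; a \<in> agr A j; s \<in> S (n - j)\<rbrakk>
          \<Longrightarrow> mad M n x (msm M j (n - j) a s) \<in> aplus_span A M S n"

definition minimal_semifree_resolution ::
  "('a::ring_1) dg_alg \<Rightarrow> ('a, 'f) dg_mod \<Rightarrow> (int \<Rightarrow> 'f set) \<Rightarrow> ('a, 'k) dg_mod \<Rightarrow> (int \<Rightarrow> 'f \<Rightarrow> 'k) \<Rightarrow> bool" where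
  "minimal_semifree_resolution A F E K eps \<longleftrightarrow>
     semifree A F E \<and> (\<forall>j. finite (E j)) \<and> quasi_iso A F K eps \<and>
     (\<forall>n. \<forall>x\<in>mgr F n. mdf F n x \<in> aplus_span A F (mgr F) (n - 1))"

definition trunc_basis :: "(int \<Rightarrow> 'f set) \<Rightarrow> int \<Rightarrow> int \<Rightarrow> 'f set" where
  "trunc_basis E r j = (if j \<le> r then E j else {})"

definition Fr :: "('a::ring_1) dg_alg \<Rightarrow> ('a, 'f) dg_mod \<Rightarrow> (int \<Rightarrow> 'f set) \<Rightarrow> int \<Rightarrow> ('a, 'f) dg_mod" where
  "Fr A F E r = F\<lparr>mgr := span_set A F (trunc_basis E r)\<rparr>"

text \<open>The subcomplex U of F with F/U = soft truncation: 0 below r, Im d_(r+1) in degree r, F above.\<close>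
definition trunc_sub :: "('a, 'f) dg_mod \<Rightarrow> int \<Rightarrow> int \<Rightarrow> 'f set" where
  "trunc_sub F r i = (if i < r then {mzr F i} else if i = r then bnds F r else mgr F i)"

definition coset_of :: "('a, 'f) dg_mod \<Rightarrow> int \<Rightarrow> int \<Rightarrow> 'f \<Rightarrow> 'f set" where
  "coset_of F r i x = {mad F i x u | u. u \<in> trunc_sub F r i}"

text \<open>Soft truncation tau_(<= r)(F) = F/U, elements are cosets.\<close>
definition soft_trunc :: "('a, 'f) dg_mod \<Rightarrow> int \<Rightarrow> ('a, 'f set) dg_mod" where
  "soft_trunc F r =
     \<lparr>mgr = (\<lambda>i. coset_of F r i ` mgr F i),
      mzr = (\<lambda>i. trunc_sub F r i),
      mad = (\<lambda>i X Y. {mad F i x y | x y. x \<in> X \<and> y \<in> Y}),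
      msm = (\<lambda>j i a X. {mad F (i + j) (msm F j i a x) u | x u. x \<in> X \<and> u \<in> trunc_sub F r (i + j)}),
      mdf = (\<lambda>i X. {mad F (i - 1) (mdf F i x) u | x u. x \<in> X \<and> u \<in> trunc_sub F r (i - 1)})\<rparr>"

definition trunc_proj :: "('a, 'f) dg_mod \<Rightarrow> int \<Rightarrow> int \<Rightarrow> 'f \<Rightarrow> 'f set" where
  "trunc_proj F r = coset_of F r"

definition syz :: "('a::ring_1) dg_alg \<Rightarrow> ('a, 'f) dg_mod \<Rightarrow> (int \<Rightarrow> 'f set) \<Rightarrow> int \<Rightarrow> ('a, 'f) dg_mod" where
  "syz A F E r = F\<lparr>mgr := (\<lambda>i. {x \<in> mgr (Fr A F E r) i. trunc_proj F r i x = mzr (soft_trunc F r) i})\<rparr>"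

text \<open>M and N are quasi-isomorphic (isomorphic in the derived category), witnessed by a roof
  M <- X -> N of quasi-isomorphisms with X a DG module on the carrier type 'x.\<close>
definition quasi_isomorphic_via ::
  "'x itself \<Rightarrow> ('a::ring_1) dg_alg \<Rightarrow> ('a, 'm) dg_mod \<Rightarrow> ('a, 'n) dg_mod \<Rightarrow> bool" where
  "quasi_isomorphic_via T A M N \<longleftrightarrow>
     (\<exists>(X :: ('a, 'x) dg_mod) f g. dg_module A X \<and> quasi_iso A X M f \<and> quasi_iso A X N g)"

end

theory Submission
  imports Defs
begin

text \<open>
  The soft truncation \<open>\<tau>\<^sub>\<le>\<^sub>r(F)\<close> is the quotient of \<open>F\<close> by the DG submodule \<open>U\<close> with
  \<open>U\<^sub>i = 0\<close> for \<open>i < r\<close>, \<open>U\<^sub>r = Im \<partial>\<^sub>r\<^sub>+\<^sub>1\<close> and \<open>U\<^sub>i = F\<^sub>i\<close> for \<open>i > r\<close>. Since \<open>H\<^sub>i(F) \<cong> H\<^sub>i(K) = 0\<close>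
  for \<open>i > r\<close>, the projection \<open>F \<rightarrow> \<tau>\<^sub>\<le>\<^sub>r(F)\<close> is a quasi-isomorphism, and the roof
  \<open>\<tau>\<^sub>\<le>\<^sub>r(F) \<leftarrow> F \<rightarrow> K\<close> shows \<open>\<tau>\<^sub>\<le>\<^sub>r(F) \<simeq> K\<close>.
  As \<open>A\<close> is positively graded, \<open>F\<^sub>i \<subseteq> L\<close> for \<open>i \<le> r\<close>, so the projection is still onto when
  restricted to \<open>L\<close>, and its kernel is \<open>L \<inter> U\<close>. An element of \<open>L \<inter> U\<close> is zero below \<open>r\<close>; in degree
  \<open>r\<close> it is a boundary and hence lies in \<open>A\<^sub>+F\<close> by minimality, and \<open>F\<^sub>j \<subseteq> L\<close> for \<open>j < r\<close>; above
  \<open>r\<close> its coefficients with respect to semibasis elements of degree \<open>\<le> r\<close> have positive degree.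
  In all cases it lies in \<open>A\<^sub>+L\<close>. The semibasis of \<open>L\<close> is finite because \<open>F\<close> is bounded below,
  each \<open>E\<^sub>j\<close> is finite, and \<open>1 \<noteq> 0\<close> in \<open>A\<close> forbids zero basis elements.
\<close>

section \<open>Abelian groups\<close>

lemma comm_group_hom_finprod:
  assumes "comm_group G" "comm_group H" "h \<in> hom G H" "f \<in> S \<rightarrow> carrier G"
  shows "h (finprod G f S) = finprod H (h \<circ> f) S"
proof -
  interpret G: comm_group G by fact
  interpret H: comm_group H by fact
  interpret group_hom G H h by (simp add: group_hom_def group_hom_axioms_def assms(3)
      G.group_axioms H.group_axioms)
  show ?thesis
    using assms(4) by (induct S rule: infinite_finite_induct) (auto simp: Pi_def)
qed

lemma (in comm_group) finprod_subgroup_closed: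
  assumes H: "subgroup H G" and f: "f \<in> S \<rightarrow> H"
  shows "finprod G f S \<in> H"
  using f
proof (induct S rule: infinite_finite_induct)
  case (insert x S)
  then have "f \<in> S \<rightarrow> carrier G" "f x \<in> carrier G"
    using subgroup.subset[OF H] by auto
  with insert show ?case by (simp add: subgroup.m_closed[OF H])
qed (simp_all add: subgroup.one_closed[OF H])

context comm_group
begin

lemma lcos_eq_iff:
  assumes H: "subgroup H G" and x: "x \<in> carrier G" and y: "y \<in> carrier G"
  shows "x <# H = y <# H \<longleftrightarrow> inv y \<otimes> x \<in> H"
proof
  assume "x <# H = y <# H"
  moreover have "x \<in> x <# H"
    unfolding l_coset_def using x subgroup.one_closed[OF H] by force
  ultimately have "x \<in> y <# H" by simp
  then obtain h where "h \<in> H" "x = y \<otimes> h"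
    unfolding l_coset_def by blast
  then show "inv y \<otimes> x \<in> H"
    using y subgroup.mem_carrier[OF H] by (simp add: m_assoc[symmetric])
next
  assume "inv y \<otimes> x \<in> H"
  then have "x \<in> y <# H"
    using subgroup.lcos_module_rev[OF H is_group y x] by blast
  then show "x <# H = y <# H"
    using l_repr_independence[OF _ y H] by simp
qed

lemma lcos_eq_subgroup_iff:
  assumes "subgroup H G" "x \<in> carrier G"
  shows "x <# H = H \<longleftrightarrow> x \<in> H"
  using lcos_eq_iff[OF assms one_closed] lcos_mult_one[OF subgroup.subset[OF assms(1)]] assms(2)
  by simp

lemma lcos_set_mult:
  assumes H: "subgroup H G" and x: "x \<in> carrier G" and y: "y \<in> carrier G"
  shows "(x <# H) <#> (y <# H) = (x \<otimes> y) <# H"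
proof -
  interpret normal H G by (rule subgroup_imp_normal[OF H])
  show ?thesis
    using rcos_sum[OF x y] coset_eq x y by simp
qed

end

lemma hom_lcos_set_mult:
  assumes G: "comm_group G" and G': "comm_group G'"
    and H: "subgroup H G" and H': "subgroup H' G'"
    and h: "h \<in> hom G G'" and hH: "h ` H \<subseteq> H'" and x: "x \<in> carrier G"
  shows "h ` (x <#\<^bsub>G\<^esub> H) <#>\<^bsub>G'\<^esub> H' = h x <#\<^bsub>G'\<^esub> H'"
proof -
  interpret G: comm_group G by (rule G)
  interpret G': comm_group G' by (rule G')
  have hx: "h x \<in> carrier G'" using h x by (simp add: hom_def Pi_def)
  show ?thesis
  proof (intro equalityI subsetI)
    fix z assume "z \<in> h ` (x <#\<^bsub>G\<^esub> H) <#>\<^bsub>G'\<^esub> H'"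
    then obtain u v where u: "u \<in> H" and v: "v \<in> H'" and z: "z = h (x \<otimes>\<^bsub>G\<^esub> u) \<otimes>\<^bsub>G'\<^esub> v"
      unfolding l_coset_def set_mult_def by blast
    have "u \<in> carrier G" "v \<in> carrier G'" "h u \<in> H'"
      using u v hH subgroup.mem_carrier[OF H] subgroup.mem_carrier[OF H'] by auto
    then have "z = h x \<otimes>\<^bsub>G'\<^esub> (h u \<otimes>\<^bsub>G'\<^esub> v)" "h u \<otimes>\<^bsub>G'\<^esub> v \<in> H'"
      using z h x hx v subgroup.m_closed[OF H'] subgroup.mem_carrier[OF H']
      by (auto simp: hom_mult G'.m_assoc)
    then show "z \<in> h x <#\<^bsub>G'\<^esub> H'"
      unfolding l_coset_def by blast
  next
    fix z assume "z \<in> h x <#\<^bsub>G'\<^esub> H'"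
    then obtain v where v: "v \<in> H'" and z: "z = h x \<otimes>\<^bsub>G'\<^esub> v"
      unfolding l_coset_def by blast
    have "x \<otimes>\<^bsub>G\<^esub> \<one>\<^bsub>G\<^esub> \<in> x <#\<^bsub>G\<^esub> H"
      unfolding l_coset_def using subgroup.one_closed[OF H] by blast
    with x z v show "z \<in> h ` (x <#\<^bsub>G\<^esub> H) <#>\<^bsub>G'\<^esub> H'"
      unfolding set_mult_def by force
  qed
qed

section \<open>DG modules\<close>

definition component_group :: "('a, 'm) dg_mod \<Rightarrow> int \<Rightarrow> 'm monoid" where
  "component_group M i = \<lparr>carrier = mgr M i, mult = mad M i, one = mzr M i\<rparr>"

lemma component_group_simps [simp]:
  "carrier (component_group M i) = mgr M i"
  "mult (component_group M i) = mad M i"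
  "one (component_group M i) = mzr M i"
  by (simp_all add: component_group_def)

definition dg_submodule :: "('a::ring_1) dg_alg \<Rightarrow> ('a, 'm) dg_mod \<Rightarrow> (int \<Rightarrow> 'm set) \<Rightarrow> bool" where
  "dg_submodule A M S \<longleftrightarrow>
     (\<forall>i. subgroup (S i) (component_group M i)) \<and>
     (\<forall>i j a x. a \<in> agr A j \<longrightarrow> x \<in> S i \<longrightarrow> msm M j i a x \<in> S (i + j)) \<and>
     (\<forall>i x. x \<in> S i \<longrightarrow> mdf M i x \<in> S (i - 1))"

lemma dg_submoduleI:
  assumes "\<And>i. subgroup (S i) (component_group M i)"
    and "\<And>i j a x. a \<in> agr A j \<Longrightarrow> x \<in> S i \<Longrightarrow> msm M j i a x \<in> S (i + j)"
    and "\<And>i x. x \<in> S i \<Longrightarrow> mdf M i x \<in> S (i - 1)"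
  shows "dg_submodule A M S"
  using assms by (simp add: dg_submodule_def)

lemma dg_submoduleD:
  assumes "dg_submodule A M S"
  shows "subgroup (S i) (component_group M i)"
    and "a \<in> agr A j \<Longrightarrow> x \<in> S i \<Longrightarrow> msm M j i a x \<in> S (i + j)"
    and "x \<in> S i \<Longrightarrow> mdf M i x \<in> S (i - 1)"
  using assms by (simp_all add: dg_submodule_def)

lemma dg_hom_restrict:
  assumes "dg_hom A M N f" "dg_submodule A M S"
  shows "dg_hom A (M\<lparr>mgr := S\<rparr>) N f"
proof -
  have "x \<in> mgr M i" if "x \<in> S i" for x i
    using that subgroup.subset[OF dg_submoduleD(1)[OF assms(2)]] by auto
  then show ?thesis
    using assms(1) unfolding dg_hom_def by simp
qed

locale dg_module_over =
  fixes A :: "('a::ring_1) dg_alg" and M :: "('a, 'm) dg_mod"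
  assumes dga: "dg_algebra A" and dgm: "dg_module A M"
begin

lemma agr_zero: "0 \<in> agr A j"
  using dga unfolding dg_algebra_def by blast

lemma agr_add: "a \<in> agr A j \<Longrightarrow> b \<in> agr A j \<Longrightarrow> a + b \<in> agr A j"
  using dga unfolding dg_algebra_def by blast

lemma agr_uminus: "a \<in> agr A j \<Longrightarrow> - a \<in> agr A j"
  using dga unfolding dg_algebra_def by blast

lemma agr_mult: "a \<in> agr A j \<Longrightarrow> b \<in> agr A k \<Longrightarrow> a * b \<in> agr A (j + k)"
  using dga unfolding dg_algebra_def by blast

lemma agr_one: "1 \<in> agr A 0"
  using dga unfolding dg_algebra_def by blast

lemma agr_adf: "a \<in> agr A j \<Longrightarrow> adf A a \<in> agr A (j - 1)"
  using dga unfolding dg_algebra_def by blast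

lemma agr_sgn_mult: "a \<in> agr A j \<Longrightarrow> sgn_int k * a \<in> agr A j"
  by (simp add: sgn_int_def agr_uminus)

lemma mzr_closed: "mzr M i \<in> mgr M i"
  using dgm by (simp add: dg_module_def)

lemma mad_closed: "x \<in> mgr M i \<Longrightarrow> y \<in> mgr M i \<Longrightarrow> mad M i x y \<in> mgr M i"
  using dgm[unfolded dg_module_def, THEN conjunct1, THEN spec, of i] by blast

lemma mad_commute: "x \<in> mgr M i \<Longrightarrow> y \<in> mgr M i \<Longrightarrow> mad M i x y = mad M i y x"
  using dgm[unfolded dg_module_def, THEN conjunct1, THEN spec, of i] by blast

lemma mad_assoc:
  "x \<in> mgr M i \<Longrightarrow> y \<in> mgr M i \<Longrightarrow> z \<in> mgr M i \<Longrightarrow> mad M i (mad M i x y) z = mad M i x (mad M i y z)"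
  using dgm[unfolded dg_module_def, THEN conjunct1, THEN spec, of i] by blast

lemma mad_mzr_left: "x \<in> mgr M i \<Longrightarrow> mad M i (mzr M i) x = x"
  using dgm[unfolded dg_module_def, THEN conjunct1, THEN spec, of i] by blast

lemma mad_mzr_right: "x \<in> mgr M i \<Longrightarrow> mad M i x (mzr M i) = x"
  using mad_commute mad_mzr_left mzr_closed by metis

lemma mad_left_commute:
  "x \<in> mgr M i \<Longrightarrow> y \<in> mgr M i \<Longrightarrow> z \<in> mgr M i \<Longrightarrow> mad M i x (mad M i y z) = mad M i y (mad M i x z)"
  using mad_assoc mad_commute by metis

lemma mad_inverse: "x \<in> mgr M i \<Longrightarrow> \<exists>y\<in>mgr M i. mad M i x y = mzr M i"
  using dgm[unfolded dg_module_def, THEN conjunct1, THEN spec, of i] by blast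

lemma msm_closed: "a \<in> agr A j \<Longrightarrow> x \<in> mgr M i \<Longrightarrow> msm M j i a x \<in> mgr M (i + j)"
  using dgm by (simp add: dg_module_def)

lemma msm_add_left:
  "a \<in> agr A j \<Longrightarrow> b \<in> agr A j \<Longrightarrow> x \<in> mgr M i \<Longrightarrow>
   msm M j i (a + b) x = mad M (i + j) (msm M j i a x) (msm M j i b x)"
  using dgm by (simp add: dg_module_def)

lemma msm_add_right:
  "a \<in> agr A j \<Longrightarrow> x \<in> mgr M i \<Longrightarrow> y \<in> mgr M i \<Longrightarrow>
   msm M j i a (mad M i x y) = mad M (i + j) (msm M j i a x) (msm M j i a y)"
  using dgm by (simp add: dg_module_def)

lemma msm_one: "x \<in> mgr M i \<Longrightarrow> msm M 0 i 1 x = x"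
  using dgm by (simp add: dg_module_def)

lemma msm_msm:
  "a \<in> agr A j \<Longrightarrow> b \<in> agr A k \<Longrightarrow> x \<in> mgr M i \<Longrightarrow>
   msm M k (i + j) b (msm M j i a x) = msm M (j + k) i (b * a) x"
  using dgm by (simp add: dg_module_def)

lemma mdf_closed: "x \<in> mgr M i \<Longrightarrow> mdf M i x \<in> mgr M (i - 1)"
  using dgm by (simp add: dg_module_def)

lemma mdf_mdf: "x \<in> mgr M i \<Longrightarrow> mdf M (i - 1) (mdf M i x) = mzr M (i - 2)"
  using dgm by (simp add: dg_module_def)

lemma mdf_mad: "x \<in> mgr M i \<Longrightarrow> y \<in> mgr M i \<Longrightarrow> mdf M i (mad M i x y) = mad M (i - 1) (mdf M i x) (mdf M i y)"
  using dgm by (simp add: dg_module_def)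

lemma mdf_msm:
  "a \<in> agr A j \<Longrightarrow> x \<in> mgr M i \<Longrightarrow> mdf M (i + j) (msm M j i a x) =
     mad M (i + j - 1) (msm M (j - 1) i (adf A a) x) (msm M j (i - 1) (sgn_int j * a) (mdf M i x))"
  using dgm by (simp add: dg_module_def)

lemma comm_group_component: "comm_group (component_group M i)"
proof (rule comm_groupI)
  fix x assume x: "x \<in> carrier (component_group M i)"
  then obtain y where "y \<in> mgr M i" "mad M i x y = mzr M i" using mad_inverse by auto
  then show "\<exists>y\<in>carrier (component_group M i). y \<otimes>\<^bsub>component_group M i\<^esub> x = \<one>\<^bsub>component_group M i\<^esub>"
    using x mad_commute[of x i y] by auto
qed (auto simp: mzr_closed mad_closed mad_assoc mad_mzr_left intro: mad_commute)

lemma mad_idem_eq_mzr: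
  assumes "y \<in> mgr M i" "mad M i y y = y"
  shows "y = mzr M i"
proof -
  interpret comm_group "component_group M i" by (rule comm_group_component)
  show ?thesis
    using l_cancel_one[of y y] assms by simp
qed

lemma msm_hom: "a \<in> agr A j \<Longrightarrow> msm M j i a \<in> hom (component_group M i) (component_group M (i + j))"
  by (auto simp: hom_def msm_closed msm_add_right)

lemma mdf_hom: "mdf M i \<in> hom (component_group M i) (component_group M (i - 1))"
  by (auto simp: hom_def mdf_closed mdf_mad)

lemma msm_zero_left: "x \<in> mgr M i \<Longrightarrow> msm M j i 0 x = mzr M (i + j)"
  using msm_add_left[OF agr_zero agr_zero, of x i] msm_closed[OF agr_zero]
  by (intro mad_idem_eq_mzr) auto

lemma msm_mzr: "a \<in> agr A j \<Longrightarrow> msm M j i a (mzr M i) = mzr M (i + j)"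
  using group_hom.hom_one[of "component_group M i" "component_group M (i + j)" "msm M j i a"]
    msm_hom comm_group_component by (simp add: group_hom_def group_hom_axioms_def comm_group.axioms(2))

lemma mdf_mzr: "mdf M i (mzr M i) = mzr M (i - 1)"
  using group_hom.hom_one[of "component_group M i" "component_group M (i - 1)" "mdf M i"]
    mdf_hom comm_group_component by (simp add: group_hom_def group_hom_axioms_def comm_group.axioms(2))

lemma msm_finprod:
  "a \<in> agr A j \<Longrightarrow> f \<in> S \<rightarrow> mgr M i \<Longrightarrow>
   msm M j i a (finprod (component_group M i) f S) = finprod (component_group M (i + j)) (msm M j i a \<circ> f) S"
  by (rule comm_group_hom_finprod[OF comm_group_component comm_group_component msm_hom]) auto

lemma mdf_finprod:
  "f \<in> S \<rightarrow> mgr M i \<Longrightarrow>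
   mdf M i (finprod (component_group M i) f S) = finprod (component_group M (i - 1)) (mdf M i \<circ> f) S"
  by (rule comm_group_hom_finprod[OF comm_group_component comm_group_component mdf_hom]) auto

lemma dg_module_restrict:
  assumes "dg_submodule A M S"
  shows "dg_module A (M\<lparr>mgr := S\<rparr>)"
proof -
  note sub = dg_submoduleD[OF assms]
  have S: "x \<in> S i \<Longrightarrow> x \<in> mgr M i" for x i
    using subgroup.subset[OF sub(1)] by auto
  have zero: "mzr M i \<in> S i" and add: "x \<in> S i \<Longrightarrow> y \<in> S i \<Longrightarrow> mad M i x y \<in> S i" for i x y
    using subgroup.one_closed[OF sub(1)] subgroup.m_closed[OF sub(1)] by auto
  have inv: "\<exists>y\<in>S i. mad M i x y = mzr M i" if x: "x \<in> S i" for x i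
  proof -
    interpret comm_group "component_group M i" by (rule comm_group_component)
    show ?thesis
      using subgroup.m_inv_closed[OF sub(1) x] S[OF x] r_inv[of x]
      by (intro bexI[of _ "inv\<^bsub>component_group M i\<^esub> x"]) auto
  qed
  show ?thesis
    unfolding dg_module_def
    by (simp add: S zero add inv sub(2,3) mad_commute mad_assoc mad_left_commute mad_mzr_left mad_mzr_right
        msm_add_left msm_add_right msm_one msm_msm mdf_mdf mdf_mad mdf_msm)
qed


lemma dg_submodule_Int:
  assumes S: "dg_submodule A M S" and T: "dg_submodule A M T"
  shows "dg_submodule A M (\<lambda>i. S i \<inter> T i)"
proof (rule dg_submoduleI)
  fix i
  show "subgroup (S i \<inter> T i) (component_group M i)"
    using comm_group.axioms(2)[OF comm_group_component] dg_submoduleD(1)[OF S] dg_submoduleD(1)[OF T]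
    by (rule group.subgroups_Inter_pair)
qed (use dg_submoduleD(2,3)[OF S] dg_submoduleD(2,3)[OF T] in auto)

end

section \<open>Quotients of DG modules\<close>

definition quotient_dg_mod :: "('a, 'm) dg_mod \<Rightarrow> (int \<Rightarrow> 'm set) \<Rightarrow> ('a, 'm set) dg_mod" where
  "quotient_dg_mod M U =
     \<lparr>mgr = (\<lambda>i. (\<lambda>x. x <#\<^bsub>component_group M i\<^esub> U i) ` mgr M i),
      mzr = U,
      mad = (\<lambda>i. set_mult (component_group M i)),
      msm = (\<lambda>j i a X. msm M j i a ` X <#>\<^bsub>component_group M (i + j)\<^esub> U (i + j)),
      mdf = (\<lambda>i X. mdf M i ` X <#>\<^bsub>component_group M (i - 1)\<^esub> U (i - 1))\<rparr>"

locale dg_quotient = dg_module_over +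
  fixes U :: "int \<Rightarrow> 'b set"
  assumes dg_submodule: "dg_submodule A M U"
begin

abbreviation Q where "Q \<equiv> quotient_dg_mod M U"

definition coset :: "int \<Rightarrow> 'b \<Rightarrow> 'b set" where
  "coset i x = x <#\<^bsub>component_group M i\<^esub> U i"

lemma subgroup_U: "subgroup (U i) (component_group M i)"
  using dg_submoduleD(1)[OF dg_submodule] .

lemma mgr_quotient: "mgr Q i = coset i ` mgr M i"
  by (simp add: quotient_dg_mod_def coset_def)

lemma mzr_quotient: "mzr Q i = coset i (mzr M i)"
proof -
  interpret comm_group "component_group M i" by (rule comm_group_component)
  show ?thesis
    using lcos_mult_one[OF subgroup.subset[OF subgroup_U]] by (simp add: quotient_dg_mod_def coset_def)
qed

lemma coset_eq_U_iff: "x \<in> mgr M i \<Longrightarrow> coset i x = U i \<longleftrightarrow> x \<in> U i"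
  using comm_group.lcos_eq_subgroup_iff[OF comm_group_component subgroup_U] by (simp add: coset_def)

lemma coset_eq_iff:
  "x \<in> mgr M i \<Longrightarrow> y \<in> mgr M i \<Longrightarrow> coset i x = coset i y \<longleftrightarrow> inv\<^bsub>component_group M i\<^esub> y \<otimes>\<^bsub>component_group M i\<^esub> x \<in> U i"
  using comm_group.lcos_eq_iff[OF comm_group_component subgroup_U] by (simp add: coset_def)

lemma mad_coset: "x \<in> mgr M i \<Longrightarrow> y \<in> mgr M i \<Longrightarrow> mad Q i (coset i x) (coset i y) = coset i (mad M i x y)"
  using comm_group.lcos_set_mult[OF comm_group_component subgroup_U]
  by (simp add: quotient_dg_mod_def coset_def)

lemma msm_coset:
  assumes a: "a \<in> agr A j" and x: "x \<in> mgr M i"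
  shows "msm Q j i a (coset i x) = coset (i + j) (msm M j i a x)"
proof -
  have "msm M j i a ` U i \<subseteq> U (i + j)"
    using dg_submoduleD(2)[OF dg_submodule a] by blast
  then show ?thesis
    using hom_lcos_set_mult[OF comm_group_component comm_group_component subgroup_U subgroup_U
        msm_hom[OF a]] x
    by (simp add: quotient_dg_mod_def coset_def)
qed

lemma mdf_coset:
  assumes x: "x \<in> mgr M i"
  shows "mdf Q i (coset i x) = coset (i - 1) (mdf M i x)"
proof -
  have "mdf M i ` U i \<subseteq> U (i - 1)"
    using dg_submoduleD(3)[OF dg_submodule] by blast
  then show ?thesis
    using hom_lcos_set_mult[OF comm_group_component comm_group_component subgroup_U subgroup_U mdf_hom] x
    by (simp add: quotient_dg_mod_def coset_def)
qed

lemma coset_in_quotient: "x \<in> mgr M i \<Longrightarrow> coset i x \<in> mgr Q i"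
  by (simp add: mgr_quotient)

lemma dg_module_quotient: "dg_module A Q"
proof -
  have msm_closed': "msm M j i a x \<in> mgr M k" if "a \<in> agr A j" "x \<in> mgr M i" "i + j = k" for a j x i k
    using msm_closed that by blast
  have agr_mult': "b * a \<in> agr A (j + k)" if "a \<in> agr A j" "b \<in> agr A k" for a b j k
    using agr_mult[OF that(2,1)] by (simp add: add.commute)
  have inverse: "\<exists>y\<in>mgr M i. coset i (mad M i x y) = coset i (mzr M i)" if "x \<in> mgr M i" for x i
    using mad_inverse[OF that] by metis
  show ?thesis
    unfolding dg_module_def mgr_quotient ball_simps bex_simps
    by (simp add: mad_coset msm_coset mdf_coset mzr_quotient inverse mzr_closed mad_closed msm_closed' mdf_closed agr_one agr_add agr_adf agr_sgn_mult agr_mult'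
        mad_commute mad_assoc mad_left_commute mad_mzr_left mad_mzr_right msm_add_left msm_add_right msm_one msm_msm
        mdf_mdf mdf_mad mdf_msm add_ac add_diff_eq diff_add_eq)
qed

lemma quotient_mgrE:
  assumes "X \<in> mgr Q i"
  obtains x where "x \<in> mgr M i" "X = coset i x"
  using assms by (auto simp: mgr_quotient)

lemma dg_hom_coset: "dg_hom A M Q coset"
  unfolding dg_hom_def using coset_in_quotient mad_coset mdf_coset msm_coset by simp

end

section \<open>Linear combinations over a homogeneous family\<close>

definition unit_coeff :: "int \<Rightarrow> 'm \<Rightarrow> int \<Rightarrow> 'm \<Rightarrow> 'a::{zero, one}" where
  "unit_coeff j e = (\<lambda>j' e'. if j' = j \<and> e' = e then 1 else 0)"

definition coeff_support :: "(int \<Rightarrow> 'm \<Rightarrow> 'a::zero) \<Rightarrow> (int \<times> 'm) set" where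
  "coeff_support c = {(j, e). c j e \<noteq> 0}"

definition lincomb_term :: "('a, 'm) dg_mod \<Rightarrow> int \<Rightarrow> (int \<Rightarrow> 'm \<Rightarrow> 'a) \<Rightarrow> int \<times> 'm \<Rightarrow> 'm" where
  "lincomb_term M n c = (\<lambda>(j, e). msm M (n - j) j (c j e) e)"

lemma msum_eq_finprod: "msum M i g S = finprod (component_group M i) g S"
  by (simp add: msum_def component_group_def)

lemma lincomb_eq_finprod:
  "lincomb M n c = finprod (component_group M n) (lincomb_term M n c) (coeff_support c)"
  by (simp add: lincomb_def msum_eq_finprod lincomb_term_def coeff_support_def)

lemma coeff_okD:
  assumes "coeff_ok A E n c"
  shows "e \<in> E j \<Longrightarrow> c j e \<in> agr A (n - j)" "e \<notin> E j \<Longrightarrow> c j e = 0" "finite (coeff_support c)"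
  using assms unfolding coeff_ok_def coeff_support_def by (metis (mono_tags) singletonD)+

lemma coeff_support_in_family: "coeff_ok A E n c \<Longrightarrow> (j, e) \<in> coeff_support c \<Longrightarrow> e \<in> E j"
  using coeff_okD(2) unfolding coeff_support_def by fastforce

context dg_module_over
begin

lemma coeff_ok_zero: "coeff_ok A E n (\<lambda>_ _. 0)"
  unfolding coeff_ok_def using agr_zero by auto

lemma coeff_ok_add:
  assumes c: "coeff_ok A E n c" and d: "coeff_ok A E n d"
  shows "coeff_ok A E n (\<lambda>j e. c j e + d j e)"
proof -
  have "coeff_support (\<lambda>j e. c j e + d j e) \<subseteq> coeff_support c \<union> coeff_support d"
    unfolding coeff_support_def by auto
  then have "finite (coeff_support (\<lambda>j e. c j e + d j e))"
    using coeff_okD(3)[OF c] coeff_okD(3)[OF d] by (meson finite_Un finite_subset)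
  then show ?thesis
    using coeff_okD(1,2)[OF c] coeff_okD(1,2)[OF d] agr_add
    unfolding coeff_ok_def coeff_support_def by auto
qed

lemma coeff_ok_uminus:
  assumes c: "coeff_ok A E n c"
  shows "coeff_ok A E n (\<lambda>j e. - c j e)"
proof -
  have "- c j e \<in> (if e \<in> E j then agr A (n - j) else {0})" for j e
    using coeff_okD(1,2)[OF c] agr_uminus by auto
  moreover have "finite (coeff_support (\<lambda>j e. - c j e))"
    using coeff_okD(3)[OF c] unfolding coeff_support_def by simp
  ultimately show ?thesis unfolding coeff_ok_def coeff_support_def by simp
qed

lemma coeff_ok_scale:
  assumes c: "coeff_ok A E n c" and b: "b \<in> agr A k"
  shows "coeff_ok A E (n + k) (\<lambda>j e. b * c j e)"
proof -
  have "coeff_support (\<lambda>j e. b * c j e) \<subseteq> coeff_support c"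
    unfolding coeff_support_def by auto
  then have "finite (coeff_support (\<lambda>j e. b * c j e))"
    using coeff_okD(3)[OF c] by (meson finite_subset)
  moreover have "b * c j e \<in> agr A (n + k - j)" if "e \<in> E j" for j e
    using agr_mult[OF b coeff_okD(1)[OF c that]] by (simp add: algebra_simps)
  ultimately show ?thesis
    using coeff_okD(2)[OF c] unfolding coeff_ok_def coeff_support_def by auto
qed

lemma coeff_ok_mono:
  assumes c: "coeff_ok A E n c" and EE': "\<And>j. E j \<subseteq> E' j"
  shows "coeff_ok A E' n c"
proof -
  have "c j e \<in> (if e \<in> E' j then agr A (n - j) else {0})" for j e
    using coeff_okD(1,2)[OF c, of e j] EE' agr_zero by (cases "e \<in> E j") auto
  then show ?thesis
    using coeff_okD(3)[OF c] unfolding coeff_ok_def coeff_support_def by simp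
qed

lemma coeff_ok_unit:
  assumes "e \<in> E j"
  shows "coeff_ok A E j (unit_coeff j e)"
  using assms agr_one agr_zero unfolding coeff_ok_def unit_coeff_def
  by (auto intro: finite_subset[of _ "{(j, e)}"])

lemma lincomb_term_closed:
  assumes "coeff_ok A E n c" "\<And>j. E j \<subseteq> mgr M j" "e \<in> E j"
  shows "lincomb_term M n c (j, e) \<in> mgr M n"
  using msm_closed[OF coeff_okD(1)[OF assms(1,3)], of e j] assms(2,3)
  by (auto simp: lincomb_term_def)

lemma lincomb_eq_finprod_superset:
  assumes c: "coeff_ok A E n c" and E: "\<And>j. E j \<subseteq> mgr M j"
    and T: "finite T" "coeff_support c \<subseteq> T" "\<And>j e. (j, e) \<in> T \<Longrightarrow> e \<in> E j"
  shows "lincomb M n c = finprod (component_group M n) (lincomb_term M n c) T"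
proof -
  interpret comm_group "component_group M n" by (rule comm_group_component)
  have "lincomb_term M n c p = mzr M n" if "p \<in> T - coeff_support c" for p
    using that T(3) E msm_zero_left
    by (cases p) (fastforce simp: coeff_support_def lincomb_term_def)
  moreover have "lincomb_term M n c \<in> T \<rightarrow> mgr M n"
    using lincomb_term_closed[OF c E] T(3) by auto
  ultimately show ?thesis
    unfolding lincomb_eq_finprod by (intro finprod_mono_neutral_cong_left[OF T(1,2)]) auto
qed

lemma lincomb_closed:
  assumes c: "coeff_ok A E n c" and E: "\<And>j. E j \<subseteq> mgr M j"
  shows "lincomb M n c \<in> mgr M n"
proof -
  interpret comm_group "component_group M n" by (rule comm_group_component)
  have "lincomb_term M n c \<in> coeff_support c \<rightarrow> mgr M n"
    using lincomb_term_closed[OF c E] coeff_support_in_family[OF c] by auto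
  then show ?thesis
    unfolding lincomb_eq_finprod using finprod_closed by simp
qed

lemma lincomb_zero: "lincomb M n (\<lambda>_ _. 0) = mzr M n"
proof -
  interpret comm_group "component_group M n" by (rule comm_group_component)
  show ?thesis unfolding lincomb_eq_finprod coeff_support_def by simp
qed

lemma lincomb_add:
  assumes c: "coeff_ok A E n c" and d: "coeff_ok A E n d" and E: "\<And>j. E j \<subseteq> mgr M j"
  shows "mad M n (lincomb M n c) (lincomb M n d) = lincomb M n (\<lambda>j e. c j e + d j e)"
proof -
  interpret comm_group "component_group M n" by (rule comm_group_component)
  let ?T = "coeff_support c \<union> coeff_support d"
  have T: "finite ?T" using coeff_okD(3)[OF c] coeff_okD(3)[OF d] by simp
  have TE: "\<And>j e. (j, e) \<in> ?T \<Longrightarrow> e \<in> E j"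
    using coeff_support_in_family[OF c] coeff_support_in_family[OF d] by blast
  have "coeff_support (\<lambda>j e. c j e + d j e) \<subseteq> ?T"
    unfolding coeff_support_def by auto
  then have "lincomb M n (\<lambda>j e. c j e + d j e)
        = finprod (component_group M n) (lincomb_term M n (\<lambda>j e. c j e + d j e)) ?T"
    using lincomb_eq_finprod_superset[OF coeff_ok_add[OF c d] E T _ TE] by simp
  also have "\<dots> = finprod (component_group M n)
      (\<lambda>p. lincomb_term M n c p \<otimes>\<^bsub>component_group M n\<^esub> lincomb_term M n d p) ?T"
  proof (rule finprod_cong')
    fix p assume "p \<in> ?T"
    then obtain j e where p: "p = (j, e)" and e: "e \<in> E j" using TE by (cases p) blast
    show "lincomb_term M n (\<lambda>j e. c j e + d j e) p =
        lincomb_term M n c p \<otimes>\<^bsub>component_group M n\<^esub> lincomb_term M n d p"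
      using msm_add_left[OF coeff_okD(1)[OF c e] coeff_okD(1)[OF d e], of e j] e E
      by (auto simp: p lincomb_term_def)
  qed (use TE lincomb_term_closed[OF c E] lincomb_term_closed[OF d E] in \<open>auto intro!: mad_closed\<close>)
  also have "\<dots> = mad M n (lincomb M n c) (lincomb M n d)"
  proof -
    have f: "lincomb_term M n c \<in> ?T \<rightarrow> carrier (component_group M n)"
      and g: "lincomb_term M n d \<in> ?T \<rightarrow> carrier (component_group M n)"
      using TE lincomb_term_closed[OF c E] lincomb_term_closed[OF d E] by auto
    show ?thesis
      using finprod_multf[OF f g] lincomb_eq_finprod_superset[OF c E T Un_upper1 TE]
        lincomb_eq_finprod_superset[OF d E T Un_upper2 TE] by simp
  qed
  finally show ?thesis by simp
qed

lemma lincomb_scale: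
  assumes c: "coeff_ok A E n c" and E: "\<And>j. E j \<subseteq> mgr M j" and b: "b \<in> agr A k"
  shows "msm M k n b (lincomb M n c) = lincomb M (n + k) (\<lambda>j e. b * c j e)"
proof -
  interpret comm_group "component_group M (n + k)" by (rule comm_group_component)
  have TE: "\<And>j e. (j, e) \<in> coeff_support c \<Longrightarrow> e \<in> E j"
    using coeff_support_in_family[OF c] by blast
  have "coeff_support (\<lambda>j e. b * c j e) \<subseteq> coeff_support c"
    unfolding coeff_support_def by auto
  then have "lincomb M (n + k) (\<lambda>j e. b * c j e)
      = finprod (component_group M (n + k)) (lincomb_term M (n + k) (\<lambda>j e. b * c j e)) (coeff_support c)"
    using lincomb_eq_finprod_superset[OF coeff_ok_scale[OF c b] E coeff_okD(3)[OF c] _ TE] by simp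
  also have "\<dots> = finprod (component_group M (n + k)) (msm M k n b \<circ> lincomb_term M n c) (coeff_support c)"
  proof (rule finprod_cong')
    fix p assume "p \<in> coeff_support c"
    then obtain j e where p: "p = (j, e)" and e: "e \<in> E j" using TE by (cases p) blast
    have "msm M k (j + (n - j)) b (msm M (n - j) j (c j e) e) = msm M (n - j + k) j (b * c j e) e"
      using msm_msm[OF coeff_okD(1)[OF c e] b] e E by blast
    then show "lincomb_term M (n + k) (\<lambda>j e. b * c j e) p = (msm M k n b \<circ> lincomb_term M n c) p"
      by (simp add: p lincomb_term_def algebra_simps)
  qed (use TE lincomb_term_closed[OF c E] in \<open>auto intro!: msm_closed[OF b, simplified add.commute]\<close>)
  also have "\<dots> = msm M k n b (lincomb M n c)"
  proof -
    have "lincomb_term M n c \<in> coeff_support c \<rightarrow> mgr M n"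
      using TE lincomb_term_closed[OF c E] by auto
    then show ?thesis
      unfolding lincomb_eq_finprod by (simp add: msm_finprod[OF b])
  qed
  finally show ?thesis by simp
qed

lemma lincomb_unit:
  assumes E: "\<And>j. E j \<subseteq> mgr M j" and e: "e \<in> E j"
  shows "lincomb M j (unit_coeff j e) = e"
proof -
  interpret comm_group "component_group M j" by (rule comm_group_component)
  have "coeff_support (unit_coeff j e) \<subseteq> {(j, e)}"
    by (auto simp: coeff_support_def unit_coeff_def split: if_splits)
  then have "lincomb M j (unit_coeff j e) = finprod (component_group M j) (lincomb_term M j (unit_coeff j e)) {(j, e)}"
    using e by (intro lincomb_eq_finprod_superset[OF coeff_ok_unit[where E = E, OF e] E]) auto
  also have "\<dots> = e"
    using lincomb_term_closed[OF coeff_ok_unit[where E = E, OF e] E e] msm_one[of e j] E e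
    by (auto simp: lincomb_term_def unit_coeff_def mad_mzr_right)
  finally show ?thesis .
qed

lemma span_set_subset: "(\<And>j. E j \<subseteq> mgr M j) \<Longrightarrow> span_set A M E n \<subseteq> mgr M n"
  unfolding span_set_def using lincomb_closed by blast

lemma family_in_span_set:
  assumes E: "\<And>j. E j \<subseteq> mgr M j" and e: "e \<in> E j"
  shows "e \<in> span_set A M E j"
  unfolding span_set_def using coeff_ok_unit[where E = E, OF e] lincomb_unit[OF E e] by force

lemma span_set_scale:
  assumes E: "\<And>j. E j \<subseteq> mgr M j" and a: "a \<in> agr A k" and x: "x \<in> span_set A M E n"
  shows "msm M k n a x \<in> span_set A M E (n + k)"
proof -
  obtain c where c: "coeff_ok A E n c" and x: "x = lincomb M n c"
    using x unfolding span_set_def by blast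
  show ?thesis
    using lincomb_scale[OF c E a] coeff_ok_scale[OF c a] unfolding span_set_def x by blast
qed

lemma span_set_subgroup:
  assumes E: "\<And>j. E j \<subseteq> mgr M j"
  shows "subgroup (span_set A M E n) (component_group M n)"
proof -
  interpret comm_group "component_group M n" by (rule comm_group_component)
  show ?thesis
  proof (rule subgroupI)
    show "span_set A M E n \<subseteq> carrier (component_group M n)"
      using span_set_subset[OF E] by simp
    show "span_set A M E n \<noteq> {}"
      unfolding span_set_def using coeff_ok_zero by blast
  next
    fix x y assume "x \<in> span_set A M E n" "y \<in> span_set A M E n"
    then obtain c d where c: "coeff_ok A E n c" "x = lincomb M n c"
      and d: "coeff_ok A E n d" "y = lincomb M n d"
      unfolding span_set_def by blast
    show "x \<otimes>\<^bsub>component_group M n\<^esub> y \<in> span_set A M E n"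
      using lincomb_add[OF c(1) d(1) E] coeff_ok_add[OF c(1) d(1)] unfolding span_set_def c(2) d(2)
      by force
  next
    fix x assume "x \<in> span_set A M E n"
    then obtain c where c: "coeff_ok A E n c" and x: "x = lincomb M n c"
      unfolding span_set_def by blast
    have "mad M n (lincomb M n (\<lambda>j e. - c j e)) x = mzr M n"
      using lincomb_add[OF coeff_ok_uminus[OF c] c E] lincomb_zero x by simp
    then have "inv\<^bsub>component_group M n\<^esub> x = lincomb M n (\<lambda>j e. - c j e)"
      using inv_equality lincomb_closed[OF c E] lincomb_closed[OF coeff_ok_uminus[OF c] E] x by simp
    then show "inv\<^bsub>component_group M n\<^esub> x \<in> span_set A M E n"
      using coeff_ok_uminus[OF c] unfolding span_set_def by blast
  qed
qed

lemma span_set_mdf: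
  assumes E: "\<And>j. E j \<subseteq> mgr M j"
    and dE: "\<And>j e. e \<in> E j \<Longrightarrow> mdf M j e \<in> span_set A M E (j - 1)"
    and x: "x \<in> span_set A M E n"
  shows "mdf M n x \<in> span_set A M E (n - 1)"
proof -
  obtain c where c: "coeff_ok A E n c" and x: "x = lincomb M n c"
    using x unfolding span_set_def by blast
  have TE: "\<And>j e. (j, e) \<in> coeff_support c \<Longrightarrow> e \<in> E j"
    using coeff_support_in_family[OF c] by blast
  have f: "lincomb_term M n c \<in> coeff_support c \<rightarrow> mgr M n"
    using lincomb_term_closed[OF c E] TE by auto
  have "mdf M n (lincomb_term M n c p) \<in> span_set A M E (n - 1)" if p: "p \<in> coeff_support c" for p
  proof -
    obtain j e where pe: "p = (j, e)" and e: "e \<in> E j" using TE p by (cases p) blast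
    have a: "c j e \<in> agr A (n - j)" using coeff_okD(1)[OF c e] .
    have "mdf M (j + (n - j)) (msm M (n - j) j (c j e) e) =
          mad M (j + (n - j) - 1) (msm M (n - j - 1) j (adf A (c j e)) e)
            (msm M (n - j) (j - 1) (sgn_int (n - j) * c j e) (mdf M j e))"
      using mdf_msm[OF a] E e by blast
    moreover have "msm M (n - j - 1) j (adf A (c j e)) e \<in> span_set A M E (n - 1)"
      using span_set_scale[OF E agr_adf[OF a] family_in_span_set[OF E e]] by simp
    moreover have "msm M (n - j) (j - 1) (sgn_int (n - j) * c j e) (mdf M j e) \<in> span_set A M E (n - 1)"
      using span_set_scale[OF E agr_sgn_mult[OF a] dE[OF e]] by simp
    ultimately show ?thesis
      using subgroup.m_closed[OF span_set_subgroup[OF E]] by (simp add: pe lincomb_term_def)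
  qed
  then show ?thesis
    unfolding x lincomb_eq_finprod mdf_finprod[OF f]
    by (intro comm_group.finprod_subgroup_closed[OF comm_group_component span_set_subgroup[OF E]]) auto
qed

lemma dg_submodule_span_set:
  assumes "\<And>j. E j \<subseteq> mgr M j" "\<And>j e. e \<in> E j \<Longrightarrow> mdf M j e \<in> span_set A M E (j - 1)"
  shows "dg_submodule A M (span_set A M E)"
  using assms span_set_subgroup span_set_scale span_set_mdf by (intro dg_submoduleI) auto

lemma lincomb_restrict:
  assumes S: "dg_submodule A M S" and c: "coeff_ok A E n c" and E: "\<And>j. E j \<subseteq> S j"
  shows "lincomb (M\<lparr>mgr := S\<rparr>) n c = lincomb M n c"
proof -
  interpret S: dg_module_over A "M\<lparr>mgr := S\<rparr>"
    using dga dg_module_restrict[OF S] by unfold_locales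
  have SM: "S j \<subseteq> mgr M j" for j
    using subgroup.subset[OF dg_submoduleD(1)[OF S]] by simp
  have "(\<lambda>x. x) \<in> hom (component_group (M\<lparr>mgr := S\<rparr>) n) (component_group M n)"
    using SM by (auto simp: hom_def)
  moreover have "lincomb_term M n c \<in> coeff_support c \<rightarrow> S n"
    using S.lincomb_term_closed[OF c] E coeff_support_in_family[OF c] by (auto simp: lincomb_term_def)
  ultimately show ?thesis
    using comm_group_hom_finprod[OF S.comm_group_component comm_group_component]
    by (simp add: lincomb_eq_finprod lincomb_term_def o_def)
qed

lemma semibasis_span_subfamily:
  assumes B: "semibasis A M B" and EB: "\<And>j. E j \<subseteq> B j"
    and S: "dg_submodule A M (span_set A M E)"
  shows "semibasis A (M\<lparr>mgr := span_set A M E\<rparr>) E"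
proof -
  have EM: "E j \<subseteq> mgr M j" for j
    using B EB unfolding semibasis_def by blast
  have ES: "E j \<subseteq> span_set A M E j" for j
    using family_in_span_set[OF EM] by blast
  have "\<exists>!c. coeff_ok A E n c \<and> x = lincomb (M\<lparr>mgr := span_set A M E\<rparr>) n c"
    if x_span: "x \<in> span_set A M E n" for n x
  proof -
    obtain c where c: "coeff_ok A E n c" and x: "x = lincomb M n c"
      using x_span unfolding span_set_def by blast
    have unique: "\<exists>!c. coeff_ok A B n c \<and> x = lincomb M n c"
      using B lincomb_closed[OF c EM] unfolding semibasis_def x by blast
    show ?thesis
    proof (rule ex1I[of _ c])
      show "coeff_ok A E n c \<and> x = lincomb (M\<lparr>mgr := span_set A M E\<rparr>) n c"
        using c x lincomb_restrict[OF S c ES] by simp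
    next
      fix d assume d: "coeff_ok A E n d \<and> x = lincomb (M\<lparr>mgr := span_set A M E\<rparr>) n d"
      then have "coeff_ok A B n d \<and> x = lincomb M n d"
        using lincomb_restrict[OF S _ ES] coeff_ok_mono[OF _ EB] by simp
      moreover have "coeff_ok A B n c \<and> x = lincomb M n c"
        using c x coeff_ok_mono[OF _ EB] by simp
      ultimately show "d = c"
        using unique by blast
    qed
  qed
  then show ?thesis
    using ES unfolding semibasis_def by simp
qed

lemma lincomb_in_aplus_span:
  assumes c: "coeff_ok A E n c" and E: "\<And>j. E j \<subseteq> mgr M j" and ES: "\<And>j. E j \<subseteq> S j"
    and deg: "\<And>j e. (j, e) \<in> coeff_support c \<Longrightarrow> j < n"
  shows "lincomb M n c \<in> aplus_span A M S n"
proof -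
  interpret comm_group "component_group M n" by (rule comm_group_component)
  have TE: "\<And>j e. (j, e) \<in> coeff_support c \<Longrightarrow> e \<in> E j"
    using coeff_support_in_family[OF c] by blast
  have "finprod (component_group M n) (lincomb_term M n c) T \<in> aplus_span A M S n"
    if "T \<subseteq> coeff_support c" for T
    using that
  proof (induct T rule: infinite_finite_induct)
    case (insert p T)
    obtain j e where p: "p = (j, e)" and e: "e \<in> E j"
      using TE insert(4) by (cases p) blast
    have f: "lincomb_term M n c \<in> T \<rightarrow> mgr M n"
      using lincomb_term_closed[OF c E] TE insert(4) by auto
    then have "finprod (component_group M n) (lincomb_term M n c) T \<in> mgr M n"
      using finprod_closed by simp
    then have "finprod (component_group M n) (lincomb_term M n c) (insert p T)
        = mad M n (finprod (component_group M n) (lincomb_term M n c) T) (lincomb_term M n c p)"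
      using insert(1,2) f mad_commute lincomb_term_closed[OF c E e] by (simp add: p)
    also have "lincomb_term M n c p = msm M (n - j) (n - (n - j)) (c j e) e"
      by (simp add: p lincomb_term_def)
    finally show ?case
      using aplus_span.step[OF insert(3) _ coeff_okD(1)[OF c e]] insert(4) deg ES e p by force
  qed (simp_all add: aplus_span.zero)
  then show ?thesis
    unfolding lincomb_eq_finprod by simp
qed

end

lemma aplus_span_restrict: "aplus_span A (M\<lparr>mgr := T\<rparr>) S n = aplus_span A M S n"
proof (intro equalityI subsetI)
  fix x assume "x \<in> aplus_span A (M\<lparr>mgr := T\<rparr>) S n"
  then show "x \<in> aplus_span A M S n"
    by induct (auto intro: aplus_span.intros)
next
  fix x assume "x \<in> aplus_span A M S n"
  then show "x \<in> aplus_span A (M\<lparr>mgr := T\<rparr>) S n"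
    by induct (auto intro: aplus_span.intros[where M = "M\<lparr>mgr := T\<rparr>", simplified])
qed

lemma aplus_span_mono:
  assumes "\<And>k. k < n \<Longrightarrow> S k \<subseteq> S' k"
  shows "aplus_span A M S n \<subseteq> aplus_span A M S' n"
proof
  fix x assume "x \<in> aplus_span A M S n"
  then show "x \<in> aplus_span A M S' n"
  proof induct
    case (step x j a s)
    then show ?case
      using assms[of "n - j"] by (auto intro: aplus_span.step)
  qed (rule aplus_span.zero)
qed

section \<open>Homology\<close>

context dg_module_over
begin

lemma bnds_subgroup: "subgroup (bnds M i) (component_group M i)"
proof -
  interpret group_hom "component_group M (i + 1)" "component_group M i" "mdf M (i + 1)"
    using mdf_hom[of "i + 1"] comm_group_component
    by (simp add: group_hom_def group_hom_axioms_def comm_group.axioms(2))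
  show ?thesis
    using img_is_subgroup by (simp add: bnds_def)
qed

lemma dg_hom_mzr:
  assumes "dg_module_over A N" "dg_hom A N M f"
  shows "f i (mzr N i) = mzr M i"
proof (rule mad_idem_eq_mzr)
  show "f i (mzr N i) \<in> mgr M i"
    using assms dg_module_over.mzr_closed unfolding dg_hom_def by blast
  show "mad M i (f i (mzr N i)) (f i (mzr N i)) = f i (mzr N i)"
    using assms dg_module_over.mzr_closed dg_module_over.mad_mzr_left unfolding dg_hom_def by metis
qed

lemma quasi_isoI:
  assumes hom: "dg_hom A N M f"
    and inj: "\<And>i z. z \<in> cycles N i \<Longrightarrow> f i z \<in> bnds M i \<Longrightarrow> z \<in> bnds N i"
    and surj: "\<And>i w. w \<in> cycles M i \<Longrightarrow> \<exists>z\<in>cycles N i. w = f i z"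
  shows "quasi_iso A N M f"
proof -
  have "w = mad M i w (mdf M (i + 1) (mzr M (i + 1)))" if "w \<in> mgr M i" for w i
    using mdf_mzr[of "i + 1"] mad_mzr_right[OF that] by simp
  then show ?thesis
    unfolding quasi_iso_def using hom inj surj mzr_closed
    by (metis (no_types, lifting) cycles_def mem_Collect_eq)
qed

lemma quasi_iso_reflects_vanishing:
  assumes N: "dg_module_over A N" and qi: "quasi_iso A M N f" and van: "homology_vanishes N i"
  shows "homology_vanishes M i"
  unfolding homology_vanishes_def
proof
  fix z assume z: "z \<in> cycles M i"
  have hom: "dg_hom A M N f" using qi unfolding quasi_iso_def by blast
  have "mdf N i (f i z) = f (i - 1) (mdf M i z)"
    using hom z unfolding dg_hom_def cycles_def by (metis (no_types, lifting) mem_Collect_eq)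
  also have "\<dots> = f (i - 1) (mzr M (i - 1))"
    using z unfolding cycles_def by simp
  also have "\<dots> = mzr N (i - 1)"
    using dg_module_over.dg_hom_mzr[OF N dg_module_over_axioms hom] .
  finally have "f i z \<in> cycles N i"
    using hom z unfolding dg_hom_def cycles_def by simp
  then show "z \<in> bnds M i"
    using van qi z unfolding homology_vanishes_def quasi_iso_def by blast
qed

end

section \<open>Positively graded DG algebras\<close>

locale pos_dg_module_over = dg_module_over +
  assumes positive: "positively_graded A"
begin

lemma agr_negative: "j < 0 \<Longrightarrow> agr A j = {0}"
  using positive by (simp add: positively_graded_def)

lemma mdf_msm_degree_zero:
  assumes a: "a \<in> agr A 0" and y: "y \<in> mgr M i"
  shows "mdf M i (msm M 0 i a y) = msm M 0 (i - 1) a (mdf M i y)"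
proof -
  have "adf A a = 0"
    using agr_adf[OF a] agr_negative[of "0 - 1"] by simp
  then show ?thesis
    using mdf_msm[OF a y] msm_zero_left[OF y, of "0 - 1"] mad_mzr_left msm_closed[OF a mdf_closed[OF y]]
    by (simp add: sgn_int_def)
qed

end

section \<open>Soft truncation of a semifree resolution\<close>

locale soft_truncation = pos_dg_module_over A F for A :: "('a::ring_1) dg_alg" and F :: "('a, 'f) dg_mod" +
  fixes E :: "int \<Rightarrow> 'f set" and r :: int
  assumes semibasis: "semibasis A F E"
begin

abbreviation L where "L \<equiv> span_set A F (trunc_basis E r)"

abbreviation U where "U \<equiv> trunc_sub F r"

lemma trunc_basis_subset: "trunc_basis E r j \<subseteq> E j"
  by (simp add: trunc_basis_def)

lemma E_subset: "E j \<subseteq> mgr F j"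
  using semibasis unfolding semibasis_def by blast

lemma trunc_basis_subset_mgr: "trunc_basis E r j \<subseteq> mgr F j"
  using trunc_basis_subset E_subset by blast

lemma mgr_subset_span_below:
  assumes m: "m \<le> r"
  shows "mgr F m \<subseteq> L m"
proof
  fix x assume "x \<in> mgr F m"
  then obtain c where c: "coeff_ok A E m c" and x: "x = lincomb F m c"
    using semibasis unfolding semibasis_def by blast
  have "c j e \<in> (if e \<in> trunc_basis E r j then agr A (m - j) else {0})" for j e
  proof (cases "e \<in> E j \<and> j \<le> r")
    case False
    then have "c j e = 0"
      using coeff_okD(1,2)[OF c, of e j] agr_negative[of "m - j"] m by (cases "e \<in> E j") auto
    then show ?thesis by (simp add: agr_zero)
  qed (use coeff_okD(1)[OF c] in \<open>simp add: trunc_basis_def\<close>)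
  then have "coeff_ok A (trunc_basis E r) m c"
    using c unfolding coeff_ok_def by blast
  then show "x \<in> L m"
    unfolding span_set_def x by blast
qed

lemma dg_submodule_span: "dg_submodule A F L"
proof (rule dg_submodule_span_set[OF trunc_basis_subset_mgr])
  fix j e assume "e \<in> trunc_basis E r j"
  then have "j - 1 \<le> r" "mdf F j e \<in> mgr F (j - 1)"
    using E_subset mdf_closed by (auto simp: trunc_basis_def split: if_splits)
  then show "mdf F j e \<in> L (j - 1)"
    using mgr_subset_span_below by blast
qed

lemma Fr_eq: "Fr A F E r = F\<lparr>mgr := L\<rparr>"
  by (simp add: Fr_def)

lemma dg_module_Fr: "dg_module A (Fr A F E r)"
  unfolding Fr_eq by (rule dg_module_restrict[OF dg_submodule_span])

lemma semifree_Fr: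
  assumes "\<And>i. i < b \<Longrightarrow> mgr F i = {mzr F i}"
  shows "semifree A (Fr A F E r) (trunc_basis E r)"
  unfolding semifree_def
proof (intro conjI exI allI impI)
  show "dg_module A (Fr A F E r)" by (rule dg_module_Fr)
  show "semibasis A (Fr A F E r) (trunc_basis E r)"
    unfolding Fr_eq by (rule semibasis_span_subfamily[OF semibasis trunc_basis_subset dg_submodule_span])
  fix i assume "i < b"
  then show "mgr (Fr A F E r) i = {mzr (Fr A F E r) i}"
    using assms span_set_subset[OF trunc_basis_subset_mgr] subgroup.one_closed[OF span_set_subgroup[OF trunc_basis_subset_mgr]]
    by (fastforce simp: Fr_eq)
qed

lemma trunc_sub_below: "i < r \<Longrightarrow> U i = {mzr F i}"
  by (simp add: trunc_sub_def)

lemma trunc_sub_top: "U r = bnds F r"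
  by (simp add: trunc_sub_def)

lemma trunc_sub_above: "r < i \<Longrightarrow> U i = mgr F i"
  by (simp add: trunc_sub_def)

lemma trunc_sub_subset_bnds: "i \<le> r \<Longrightarrow> U i \<subseteq> bnds F i"
  using trunc_sub_below trunc_sub_top subgroup.one_closed[OF bnds_subgroup]
  by (cases "i = r") auto

lemma subgroup_trunc_sub: "subgroup (U i) (component_group F i)"
proof -
  interpret comm_group "component_group F i" by (rule comm_group_component)
  consider "i < r" | "i = r" | "r < i" by linarith
  then show ?thesis
    by cases (use triv_subgroup subgroup_self bnds_subgroup trunc_sub_below trunc_sub_top trunc_sub_above in auto)
qed

lemma msm_trunc_sub:
  assumes a: "a \<in> agr A j" and x: "x \<in> U i"
  shows "msm F j i a x \<in> U (i + j)"
proof -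
  have xF: "x \<in> mgr F i"
    using x subgroup.subset[OF subgroup_trunc_sub] by auto
  consider "j < 0" | "i < r" | "i = r" "j = 0" | "r < i + j" "0 \<le> j"
    by linarith
  then show ?thesis
  proof cases
    case 1
    then show ?thesis
      using a agr_negative msm_zero_left[OF xF] subgroup.one_closed[OF subgroup_trunc_sub] by auto
  next
    case 2
    then show ?thesis
      using x trunc_sub_below msm_mzr[OF a] subgroup.one_closed[OF subgroup_trunc_sub] by auto
  next
    case 3
    then obtain y where y: "y \<in> mgr F (r + 1)" and xy: "x = mdf F (r + 1) y"
      using x trunc_sub_top by (auto simp: bnds_def)
    then have "msm F j i a x = mdf F (r + 1) (msm F 0 (r + 1) a y)"
      using mdf_msm_degree_zero[of a y "r + 1"] a 3 by simp
    then show ?thesis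
      using msm_closed[OF _ y, of a 0] a 3 trunc_sub_top by (auto simp: bnds_def)
  next
    case 4
    then show ?thesis
      using msm_closed[OF a xF] trunc_sub_above by simp
  qed
qed

lemma mdf_trunc_sub:
  assumes x: "x \<in> U i"
  shows "mdf F i x \<in> U (i - 1)"
proof -
  have xF: "x \<in> mgr F i"
    using x subgroup.subset[OF subgroup_trunc_sub] by auto
  consider "i < r" | "i = r" | "i = r + 1" | "r + 1 < i"
    by linarith
  then show ?thesis
  proof cases
    case 1
    then show ?thesis
      using x trunc_sub_below mdf_mzr by simp
  next
    case 2
    then obtain y where "y \<in> mgr F (r + 1)" "x = mdf F (r + 1) y"
      using x trunc_sub_top by (auto simp: bnds_def)
    then show ?thesis
      using mdf_mdf[of y "r + 1"] 2 trunc_sub_below[of "r - 1"] by simp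
  next
    case 3
    then show ?thesis
      using xF trunc_sub_top by (auto simp: bnds_def)
  next
    case 4
    then show ?thesis
      using mdf_closed[OF xF] trunc_sub_above by simp
  qed
qed

lemma dg_submodule_trunc_sub: "dg_submodule A F U"
  using subgroup_trunc_sub msm_trunc_sub mdf_trunc_sub by (rule dg_submoduleI)

sublocale Q: dg_quotient A F U
  using dga dgm dg_submodule_trunc_sub by unfold_locales

lemma trunc_proj_eq_coset: "trunc_proj F r = Q.coset"
  by (intro ext) (auto simp: trunc_proj_def coset_of_def Q.coset_def l_coset_def)

lemma soft_trunc_eq_quotient: "soft_trunc F r = quotient_dg_mod F U"
proof -
  have "coset_of F r i = (\<lambda>x. x <#\<^bsub>component_group F i\<^esub> U i)" for i
    by (auto simp: fun_eq_iff coset_of_def l_coset_def)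
  moreover have "(\<lambda>X Y. {mad F i x y | x y. x \<in> X \<and> y \<in> Y}) = set_mult (component_group F i)" for i
    by (auto simp: set_mult_def fun_eq_iff)
  moreover have "{mad F (i + j) (msm F j i a x) u | x u. x \<in> X \<and> u \<in> U (i + j)}
      = msm F j i a ` X <#>\<^bsub>component_group F (i + j)\<^esub> U (i + j)" for i j a X
    by (auto simp: set_mult_def)
  moreover have "{mad F (i - 1) (mdf F i x) u | x u. x \<in> X \<and> u \<in> U (i - 1)}
      = mdf F i ` X <#>\<^bsub>component_group F (i - 1)\<^esub> U (i - 1)" for i X
    by (auto simp: set_mult_def)
  ultimately show ?thesis
    unfolding soft_trunc_def quotient_dg_mod_def by simp
qed

lemma syz_eq: "syz A F E r = F\<lparr>mgr := (\<lambda>i. L i \<inter> U i)\<rparr>"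
proof -
  have "{x \<in> L i. Q.coset i x = U i} = L i \<inter> U i" for i
    using Q.coset_eq_U_iff span_set_subset[OF trunc_basis_subset_mgr] by auto
  then show ?thesis
    by (simp add: syz_def Fr_eq trunc_proj_eq_coset soft_trunc_def)
qed

lemma dg_module_syz: "dg_module A (syz A F E r)"
  unfolding syz_eq by (rule dg_module_restrict[OF dg_submodule_Int[OF dg_submodule_span dg_submodule_trunc_sub]])

lemma trunc_proj_image: "trunc_proj F r i ` L i = mgr (soft_trunc F r) i"
proof -
  have "Q.coset i ` L i = Q.coset i ` mgr F i"
  proof (cases "i \<le> r")
    case True
    then have "L i = mgr F i"
      using mgr_subset_span_below span_set_subset[OF trunc_basis_subset_mgr] by (metis subset_antisym)
    then show ?thesis by simp
  next
    case False
    then have "Q.coset i x = U i" if "x \<in> mgr F i" for x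
      using Q.coset_eq_U_iff[OF that] trunc_sub_above that by simp
    moreover have "mzr F i \<in> L i" "L i \<subseteq> mgr F i"
      using subgroup.one_closed[OF span_set_subgroup[OF trunc_basis_subset_mgr]]
        span_set_subset[OF trunc_basis_subset_mgr] by auto
    ultimately show ?thesis
      using mzr_closed by (auto simp: image_iff)
  qed
  then show ?thesis
    by (simp add: soft_trunc_eq_quotient Q.mgr_quotient trunc_proj_eq_coset)
qed

lemma coset_reflects_boundaries:
  assumes van: "\<And>i. r < i \<Longrightarrow> homology_vanishes F i"
    and z: "z \<in> cycles F i" and bnd: "Q.coset i z \<in> bnds Q.Q i"
  shows "z \<in> bnds F i"
proof (cases "i \<le> r")
  case True
  interpret comm_group "component_group F i" by (rule comm_group_component)
  obtain Y where "Y \<in> mgr Q.Q (i + 1)" "Q.coset i z = mdf Q.Q (i + 1) Y"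
    using bnd unfolding bnds_def by auto
  then obtain y where y: "y \<in> mgr F (i + 1)" and zy: "Q.coset i z = Q.coset i (mdf F (i + 1) y)"
    using Q.mdf_coset by (auto elim: Q.quotient_mgrE)
  have zF: "z \<in> mgr F i" and dy: "mdf F (i + 1) y \<in> bnds F i"
    using z y unfolding cycles_def bnds_def by auto
  then have dyF: "mdf F (i + 1) y \<in> mgr F i"
    using subgroup.subset[OF bnds_subgroup] by auto
  let ?u = "inv\<^bsub>component_group F i\<^esub> mdf F (i + 1) y \<otimes>\<^bsub>component_group F i\<^esub> z"
  have u_bnd: "?u \<in> bnds F i"
    using zy Q.coset_eq_iff[OF zF dyF] trunc_sub_subset_bnds[OF True] by auto
  have "?u \<in> mgr F i"
    using m_closed[of "inv\<^bsub>component_group F i\<^esub> mdf F (i + 1) y" z] inv_closed[of "mdf F (i + 1) y"] zF dyF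
    by simp
  then have "z = mdf F (i + 1) y \<otimes>\<^bsub>component_group F i\<^esub> ?u"
    using inv_solve_left[of ?u "mdf F (i + 1) y" z] zF dyF by simp
  then show ?thesis
    using subgroup.m_closed[OF bnds_subgroup dy u_bnd] by metis
next
  case False
  then show ?thesis
    using van[of i] z unfolding homology_vanishes_def by auto
qed

lemma coset_cycles_surj:
  assumes w: "w \<in> cycles Q.Q i"
  shows "\<exists>z\<in>cycles F i. w = Q.coset i z"
proof -
  obtain x where x: "x \<in> mgr F i" and wx: "w = Q.coset i x"
    using w unfolding cycles_def by (auto elim: Q.quotient_mgrE)
  have "Q.coset (i - 1) (mdf F i x) = U (i - 1)"
    using w x wx Q.mdf_coset unfolding cycles_def by (simp add: quotient_dg_mod_def)
  then have dx: "mdf F i x \<in> U (i - 1)"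
    using Q.coset_eq_U_iff mdf_closed[OF x] by simp
  show ?thesis
  proof (cases "i \<le> r")
    case True
    then show ?thesis
      using x wx dx trunc_sub_below[of "i - 1"] unfolding cycles_def by auto
  next
    case False
    then have "U i = mgr F i"
      using trunc_sub_above by simp
    then have "Q.coset i x = Q.coset i (mzr F i)"
      using Q.coset_eq_U_iff[OF x] Q.coset_eq_U_iff[OF mzr_closed[of i]] x mzr_closed[of i] by metis
    then show ?thesis
      using wx mzr_closed mdf_mzr unfolding cycles_def by auto
  qed
qed

lemma quasi_iso_trunc_proj:
  assumes "\<And>i. r < i \<Longrightarrow> homology_vanishes F i"
  shows "quasi_iso A F (soft_trunc F r) (trunc_proj F r)"
proof -
  interpret QM: dg_module_over A Q.Q
    using dga Q.dg_module_quotient by unfold_locales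
  show ?thesis
    unfolding soft_trunc_eq_quotient trunc_proj_eq_coset
    using Q.dg_hom_coset coset_reflects_boundaries[OF assms] coset_cycles_surj by (rule QM.quasi_isoI)
qed

lemma mzr_notin_semibasis:
  assumes "(1::'a) \<noteq> 0"
  shows "mzr F j \<notin> E j"
proof
  assume e: "mzr F j \<in> E j"
  have "\<exists>!c. coeff_ok A E j c \<and> mzr F j = lincomb F j c"
    using semibasis mzr_closed unfolding semibasis_def by blast
  moreover have "coeff_ok A E j (unit_coeff j (mzr F j)) \<and> mzr F j = lincomb F j (unit_coeff j (mzr F j))"
    using coeff_ok_unit[where E = E, OF e] lincomb_unit[OF E_subset e] by simp
  moreover have "coeff_ok A E j (\<lambda>_ _. 0) \<and> mzr F j = lincomb F j (\<lambda>_ _. 0)"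
    using coeff_ok_zero lincomb_zero by simp
  ultimately have "unit_coeff j (mzr F j) = (\<lambda>_ _. 0 :: 'a)"
    by blast
  then show False
    using assms by (metis unit_coeff_def)
qed

lemma finite_trunc_basis:
  assumes bounded: "\<And>i. i < b \<Longrightarrow> mgr F i = {mzr F i}" and fin: "\<And>j. finite (E j)"
    and nontrivial: "(1::'a) \<noteq> 0"
  shows "finite {(j, e). e \<in> trunc_basis E r j}"
proof -
  have E_empty: "E j = {}" if "j < b" for j
    using E_subset[of j] bounded[OF that] mzr_notin_semibasis[OF nontrivial] by auto
  have "{(j, e). e \<in> trunc_basis E r j} \<subseteq> Sigma {b..r} E"
  proof
    fix p assume "p \<in> {(j, e). e \<in> trunc_basis E r j}"
    then obtain j e where p: "p = (j, e)" and e: "e \<in> E j" and "j \<le> r"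
      by (auto simp: trunc_basis_def split: if_splits)
    moreover have "b \<le> j"
      using E_empty e by (cases "j < b") auto
    ultimately show "p \<in> Sigma {b..r} E" by simp
  qed
  moreover have "finite (Sigma {b..r} E)"
    using fin by (intro finite_SigmaI) auto
  ultimately show ?thesis
    by (rule finite_subset)
qed

lemma syz_in_aplus_span:
  assumes minimal: "\<And>n x. x \<in> mgr F n \<Longrightarrow> mdf F n x \<in> aplus_span A F (mgr F) (n - 1)"
    and xL: "x \<in> L i" and xU: "x \<in> U i"
  shows "x \<in> aplus_span A F L i"
proof -
  consider "i < r" | "i = r" | "r < i" by linarith
  then show ?thesis
  proof cases
    case 1
    then show ?thesis
      using xU trunc_sub_below aplus_span.zero by auto
  next
    case 2
    then obtain y where y: "y \<in> mgr F (r + 1)" and "x = mdf F (r + 1) y"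
      using xU trunc_sub_top by (auto simp: bnds_def)
    then have "x \<in> aplus_span A F (mgr F) i"
      using minimal[OF y] 2 by simp
    then show ?thesis
      using aplus_span_mono[of i "mgr F" L] mgr_subset_span_below 2 by auto
  next
    case 3
    obtain c where c: "coeff_ok A (trunc_basis E r) i c" and x: "x = lincomb F i c"
      using xL unfolding span_set_def by blast
    have "j < i" if "(j, e) \<in> coeff_support c" for j e
      using coeff_support_in_family[OF c that] 3 by (simp add: trunc_basis_def split: if_splits)
    then show ?thesis
      unfolding x using family_in_span_set[OF trunc_basis_subset_mgr]
      by (intro lincomb_in_aplus_span[OF c trunc_basis_subset_mgr]) auto
  qed
qed

lemma dg_hom_trunc_proj: "dg_hom A (Fr A F E r) (soft_trunc F r) (trunc_proj F r)"
  unfolding Fr_eq soft_trunc_eq_quotient trunc_proj_eq_coset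
  by (rule dg_hom_restrict[OF Q.dg_hom_coset dg_submodule_span])

end

lemma dga_nonzero_one_neq_zero:
  assumes nonzero: "dga_nonzero A" and dga: "dg_algebra (A :: ('a::ring_1) dg_alg)"
  shows "(1::'a) \<noteq> 0"
proof
  assume "(1::'a) = 0"
  then have trivial: "x = 0" for x :: 'a
    by (metis mult_1_right mult_zero_right)
  have "homology_vanishes (alg_mod A) i" for i
  proof -
    have "0 \<in> agr A (i + 1)"
      using dga unfolding dg_algebra_def by blast
    then have "x \<in> adf A ` agr A (i + 1)" for x
      using trivial[of x] trivial[of "adf A 0"] by (metis image_eqI)
    then show ?thesis
      unfolding homology_vanishes_def cycles_def bnds_def alg_mod_def by auto
  qed
  then show False
    using nonzero unfolding dga_nonzero_def by blast
qed

theorem proposition4p2: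
  fixes A :: "('a::ring_1) dg_alg"
    and K :: "('a, 'k) dg_mod"
    and F :: "('a, 'f) dg_mod"
    and E :: "int \<Rightarrow> 'f set"
    and eps :: "int \<Rightarrow> 'f \<Rightarrow> 'k"
    and r :: int
  assumes "local_dg_algebra A"
    and "max_ideal_is_Aplus A"
    and "homologically_bounded A"
    and "dga_nonzero A"
    and "dg_module A K"
    and "homologically_finite A K"
    and "minimal_semifree_resolution A F E K eps"
    and "\<forall>i>r. homology_vanishes K i"
  shows "dg_module A (syz A F E r) \<and> dg_module A (Fr A F E r) \<and> dg_module A (soft_trunc F r) \<and>
         dg_hom A (syz A F E r) (Fr A F E r) (\<lambda>i x. x) \<and>
         dg_hom A (Fr A F E r) (soft_trunc F r) (trunc_proj F r) \<and>
         (\<forall>i. inj_on (\<lambda>x. x) (mgr (syz A F E r) i)) \<and>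
         (\<forall>i. {x \<in> mgr (Fr A F E r) i. trunc_proj F r i x = mzr (soft_trunc F r) i}
                = (\<lambda>x. x) ` mgr (syz A F E r) i) \<and>
         (\<forall>i. trunc_proj F r i ` mgr (Fr A F E r) i = mgr (soft_trunc F r) i) \<and>
         semifree A (Fr A F E r) (trunc_basis E r) \<and>
         finite {(j, e). e \<in> trunc_basis E r j} \<and>
         quasi_isomorphic_via TYPE('f) A (soft_trunc F r) K \<and>
         (\<forall>i. (\<lambda>x. x) ` mgr (syz A F E r) i \<subseteq> aplus_span A (Fr A F E r) (mgr (Fr A F E r)) i)"
proof -
  have dga: "dg_algebra A" and pos: "positively_graded A"
    using assms(1) unfolding local_dg_algebra_def by auto
  have semifree_F: "semifree A F E" and fin: "\<And>j. finite (E j)" and qi: "quasi_iso A F K eps"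
    and minimal: "\<And>n x. x \<in> mgr F n \<Longrightarrow> mdf F n x \<in> aplus_span A F (mgr F) (n - 1)"
    using assms(7) unfolding minimal_semifree_resolution_def by auto
  obtain b where bounded: "\<And>i. i < b \<Longrightarrow> mgr F i = {mzr F i}"
    using semifree_F unfolding semifree_def by blast
  interpret soft_truncation A F E r
    using dga pos semifree_F unfolding semifree_def by unfold_locales auto
  have "homology_vanishes F i" if "r < i" for i
    using quasi_iso_reflects_vanishing[OF _ qi] assms(5,8) dga that by (auto intro: dg_module_over.intro)
  then have "quasi_isomorphic_via TYPE('f) A (soft_trunc F r) K"
    unfolding quasi_isomorphic_via_def using dgm quasi_iso_trunc_proj qi by blast
  moreover have "(\<lambda>x. x) ` mgr (syz A F E r) i \<subseteq> aplus_span A (Fr A F E r) (mgr (Fr A F E r)) i" for i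
    using syz_in_aplus_span[OF minimal] by (auto simp: syz_eq Fr_eq aplus_span_restrict)
  ultimately show ?thesis
    using dg_module_syz dg_module_Fr Q.dg_module_quotient dg_hom_trunc_proj trunc_proj_image
      semifree_Fr[OF bounded] finite_trunc_basis[OF bounded fin dga_nonzero_one_neq_zero[OF assms(4) dga]]
    by (auto simp: soft_trunc_eq_quotient syz_def Fr_eq dg_hom_def syz_eq)
qed

end
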